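(* Let $\lambda$ be a generic normalized additively alternating $n\times n$ complex matrix with biresidue matrix $b$, and let $I\subseteq\{0,\dots,n-2\}$ be such that $\{i,i+1\}$ is a smoothable edge of $b$ for every $i\in I$. Then the smoothable weights $\boldsymbol\theta_i$, $i\in I$, are linearly independent over $\mathbb{C}$.
   Context: Additively alternating: $\lambda_{ji}=-\lambda_{ij}$; normalized: rows sum to $0$. $\lambda$ is generic if it has rank $n-1$ and every relevant $\operatorname{EExp}(\lambda)$-Hochschild-contributing weight is $\lambda$-Poisson-contributing, where $\operatorname{EExp}(\lambda)=(e^{\lambda_{ij}})$; a weight $\mathbf w\in\mathbb{Z}^n$ is relevant if $w_i\ge-1$, $\sum w_i=0$; $q$-Hochschild-contributing if $w_i\ge-1$ for all $i$ and $\prod_jq_{ij}^{w_j}=1$ whenever $w_i\ge0$; $\lambda$-Poisson-contributing if $w_i\ge-1$ for all $i$ and $\sum_j\lambda_{ij}w_j=0$ whenever $w_i\ge0$. The biresidue matrix is the unique normalized alternating $b$ with $b|_\Delta=(\lambda|_\Delta)^{-1}$, $\Delta=\{z\in\mathbb{C}^n:\sum z_i=0\}$. The edge $\{i,j\}$ is smoothable if $b_{ij}\ne0$ and $(b_{jk}+b_{ki})/b_{ij}\in\mathbb{Z}_{\ge0}$ for $k\ne i,j$; its smoothable weight $\boldsymbol\theta$ has $\theta_i=\theta_j=-1$ and $\theta_k=(b_{jk}+b_{ki})/b_{ij}$ for $k\neq i,j$; $\boldsymbol\theta_i$ denotes the smoothable weight of $\{i,i+1\}$. *)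

theory Defs
  imports Complex_Main "Jordan_Normal_Form.DL_Rank"
begin

text \<open>n x n complex matrices are functions nat => nat => complex, indices 0..n-1;
weights are functions nat => int, only the entries with index < n matter.\<close>

definition add_alternating :: "nat \<Rightarrow> (nat \<Rightarrow> nat \<Rightarrow> complex) \<Rightarrow> bool" where
  "add_alternating n L \<longleftrightarrow> (\<forall>i<n. \<forall>j<n. L j i = - L i j)"

definition normalized :: "nat \<Rightarrow> (nat \<Rightarrow> nat \<Rightarrow> complex) \<Rightarrow> bool" where
  "normalized n L \<longleftrightarrow> (\<forall>i<n. (\<Sum>j<n. L i j) = 0)"

definition to_mat :: "nat \<Rightarrow> (nat \<Rightarrow> nat \<Rightarrow> complex) \<Rightarrow> complex mat" where
  "to_mat n L = mat n n (\<lambda>(i,j). L i j)"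

definition mat_rank :: "nat \<Rightarrow> (nat \<Rightarrow> nat \<Rightarrow> complex) \<Rightarrow> nat" where
  "mat_rank n L = vec_space.rank n (to_mat n L)"

definition EExp :: "(nat \<Rightarrow> nat \<Rightarrow> complex) \<Rightarrow> nat \<Rightarrow> nat \<Rightarrow> complex" where
  "EExp L = (\<lambda>i j. exp (L i j))"

definition relevant_weight :: "nat \<Rightarrow> (nat \<Rightarrow> int) \<Rightarrow> bool" where
  "relevant_weight n w \<longleftrightarrow> (\<forall>i<n. w i \<ge> -1) \<and> (\<Sum>i<n. w i) = 0"

definition hochschild_contributing :: "nat \<Rightarrow> (nat \<Rightarrow> nat \<Rightarrow> complex) \<Rightarrow> (nat \<Rightarrow> int) \<Rightarrow> bool" where
  "hochschild_contributing n q w \<longleftrightarrow>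
     (\<forall>i<n. w i \<ge> -1) \<and> (\<forall>i<n. w i \<ge> 0 \<longrightarrow> (\<Prod>j<n. q i j powi w j) = 1)"

definition poisson_contributing :: "nat \<Rightarrow> (nat \<Rightarrow> nat \<Rightarrow> complex) \<Rightarrow> (nat \<Rightarrow> int) \<Rightarrow> bool" where
  "poisson_contributing n L w \<longleftrightarrow>
     (\<forall>i<n. w i \<ge> -1) \<and> (\<forall>i<n. w i \<ge> 0 \<longrightarrow> (\<Sum>j<n. L i j * of_int (w j)) = 0)"

definition generic :: "nat \<Rightarrow> (nat \<Rightarrow> nat \<Rightarrow> complex) \<Rightarrow> bool" where
  "generic n L \<longleftrightarrow> mat_rank n L = n - 1 \<and>
     (\<forall>w. relevant_weight n w \<and> hochschild_contributing n (EExp L) w \<longrightarrow> poisson_contributing n L w)"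

definition Delta :: "nat \<Rightarrow> (nat \<Rightarrow> complex) set" where
  "Delta n = {z. (\<forall>i\<ge>n. z i = 0) \<and> (\<Sum>i<n. z i) = 0}"

definition mv :: "nat \<Rightarrow> (nat \<Rightarrow> nat \<Rightarrow> complex) \<Rightarrow> (nat \<Rightarrow> complex) \<Rightarrow> nat \<Rightarrow> complex" where
  "mv n L z = (\<lambda>i. if i < n then (\<Sum>j<n. L i j * z j) else 0)"

definition is_biresidue :: "nat \<Rightarrow> (nat \<Rightarrow> nat \<Rightarrow> complex) \<Rightarrow> (nat \<Rightarrow> nat \<Rightarrow> complex) \<Rightarrow> bool" where
  "is_biresidue n L b \<longleftrightarrow> add_alternating n b \<and> normalized n b \<and>
     (\<forall>z\<in>Delta n. mv n b (mv n L z) = z \<and> mv n L (mv n b z) = z)"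

definition smoothable_edge :: "nat \<Rightarrow> (nat \<Rightarrow> nat \<Rightarrow> complex) \<Rightarrow> nat \<Rightarrow> nat \<Rightarrow> bool" where
  "smoothable_edge n b i j \<longleftrightarrow> b i j \<noteq> 0 \<and>
     (\<forall>k<n. k \<noteq> i \<and> k \<noteq> j \<longrightarrow> (\<exists>m::nat. (b j k + b k i) / b i j = of_nat m))"

definition smoothable_weight :: "(nat \<Rightarrow> nat \<Rightarrow> complex) \<Rightarrow> nat \<Rightarrow> nat \<Rightarrow> nat \<Rightarrow> complex" where
  "smoothable_weight b i j k = (if k = i \<or> k = j then -1 else (b j k + b k i) / b i j)"

end

theory Submission
  imports Defs
begin

text \<open>For alternating \<open>b\<close> the smoothable weight of an edge \<open>{i, j}\<close> is
  \<open>b (e\<^sub>i - e\<^sub>j) / b\<^sub>i\<^sub>j\<close>. The vectors \<open>e\<^sub>i - e\<^sub>i\<^sub>+\<^sub>1\<close> lie in \<open>\<Delta>\<close> and are linearly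
  independent, since their coordinate system is triangular, and \<open>b\<close> is injective on \<open>\<Delta>\<close>
  because \<open>\<lambda>\<close> inverts it there.\<close>

definition edge_vector :: "nat \<Rightarrow> nat \<Rightarrow> nat \<Rightarrow> complex" where
  "edge_vector i j k = of_bool (k = i) - of_bool (k = j)"

lemma mv_edge_vector:
  assumes "i < n" and "j < n" and "k < n"
  shows "mv n b (edge_vector i j) k = b k i - b k j"
proof -
  have "{..<n} \<inter> {l. l = i} = {i}" "{..<n} \<inter> {l. l = j} = {j}"
    using assms by auto
  then show ?thesis
    using assms by (simp add: mv_def edge_vector_def right_diff_distrib sum_subtractf)
qed

lemma add_alternating_diag:
  assumes "add_alternating n b" and "i < n"
  shows "b i i = 0"
proof -
  have "b i i = - b i i"
    using assms unfolding add_alternating_def by blast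
  then show ?thesis
    by (simp add: equal_neg_zero)
qed

lemma smoothable_weight_eq:
  assumes "add_alternating n b" and "i < n" and "j < n" and "k < n" and "b i j \<noteq> 0"
  shows "smoothable_weight b i j k = (b k i - b k j) / b i j"
proof -
  have ij: "i \<noteq> j"
    using assms add_alternating_diag by metis
  consider "k = i" | "k = j" | "k \<noteq> i" "k \<noteq> j"
    by blast
  then show ?thesis
  proof cases
    case 1
    have "b i i = 0"
      using assms add_alternating_diag by blast
    with 1 ij assms(5) show ?thesis
      by (simp add: smoothable_weight_def)
  next
    case 2
    have "b j j = 0" "b j i = - b i j"
      using assms add_alternating_diag unfolding add_alternating_def by blast+
    with 2 ij assms(5) show ?thesis
      by (simp add: smoothable_weight_def)
  next
    case 3
    have "b j k = - b k j"
      using assms unfolding add_alternating_def by blast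
    with 3 show ?thesis
      by (simp add: smoothable_weight_def)
  qed
qed

lemma sum_edge_vector:
  assumes "i < n" and "j < n"
  shows "(\<Sum>k<n. edge_vector i j k) = 0"
  using assms by (simp add: edge_vector_def sum_subtractf)

lemma mv_sum:
  "mv n b (\<lambda>k. \<Sum>i\<in>I. d i * v i k) = (\<lambda>k. \<Sum>i\<in>I. d i * mv n b (v i) k)"
proof
  fix k
  have "(\<Sum>j<n. b k j * (\<Sum>i\<in>I. d i * v i j)) = (\<Sum>j<n. \<Sum>i\<in>I. d i * (b k j * v i j))"
    by (simp add: sum_distrib_left mult.left_commute)
  also have "\<dots> = (\<Sum>i\<in>I. d i * (\<Sum>j<n. b k j * v i j))"
    by (subst sum.swap) (simp add: sum_distrib_left)
  finally show "mv n b (\<lambda>k. \<Sum>i\<in>I. d i * v i k) k = (\<Sum>i\<in>I. d i * mv n b (v i) k)"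
    by (simp add: mv_def)
qed

lemma mv_sum_edge_vector:
  assumes "add_alternating n b" and "I \<subseteq> {i. i + 1 < n}" and "\<forall>i\<in>I. b i (i + 1) \<noteq> 0"
    and "k < n"
  shows "mv n b (\<lambda>k. \<Sum>i\<in>I. c i / b i (i + 1) * edge_vector i (i + 1) k) k =
    (\<Sum>i\<in>I. c i * smoothable_weight b i (i + 1) k)"
  unfolding mv_sum
proof (rule sum.cong)
  fix i assume "i \<in> I"
  then have "i + 1 < n" and "b i (i + 1) \<noteq> 0"
    using assms(2,3) by auto
  then show "c i / b i (i + 1) * mv n b (edge_vector i (i + 1)) k =
      c i * smoothable_weight b i (i + 1) k"
    using assms(1,4) by (simp add: mv_edge_vector smoothable_weight_eq)
qed simp

lemma sum_edge_vector_in_Delta: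
  assumes "I \<subseteq> {i. i + 1 < n}"
  shows "(\<lambda>k. \<Sum>i\<in>I. d i * edge_vector i (i + 1) k) \<in> Delta n"
proof -
  have "(\<Sum>k<n. \<Sum>i\<in>I. d i * edge_vector i (i + 1) k) = (\<Sum>i\<in>I. d i * (\<Sum>k<n. edge_vector i (i + 1) k))"
    by (subst sum.swap) (simp add: sum_distrib_left)
  also have "\<dots> = 0"
    using assms by (auto simp: sum_edge_vector intro!: sum.neutral)
  finally show ?thesis
    using assms by (auto simp: Delta_def edge_vector_def intro!: sum.neutral)
qed

lemma sum_edge_vector_eq_0_imp:
  assumes "finite I" and "(\<lambda>k. \<Sum>i\<in>I. d i * edge_vector i (i + 1) k) = (\<lambda>_. 0)"
  shows "\<forall>i\<in>I. d i = 0"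
proof
  fix i assume "i \<in> I"
  then show "d i = 0"
  proof (induction i rule: less_induct)
    case (less i)
    have "(\<Sum>j\<in>I. d j * of_bool (i = j + 1)) = 0"
      using less.IH by (intro sum.neutral) auto
    moreover have "(\<Sum>j\<in>I. d j * of_bool (i = j)) = d i"
    proof -
      have "(\<Sum>j\<in>I. d j * of_bool (i = j)) = (\<Sum>j\<in>I. if i = j then d j else 0)"
        by (rule sum.cong) auto
      then show ?thesis
        using assms(1) less.prems by simp
    qed
    moreover have "(\<Sum>j\<in>I. d j * edge_vector j (j + 1) i) = 0"
      using assms(2) by metis
    moreover have "(\<Sum>j\<in>I. d j * edge_vector j (j + 1) i) =
        (\<Sum>j\<in>I. d j * of_bool (i = j)) - (\<Sum>j\<in>I. d j * of_bool (i = j + 1))"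
      by (simp add: edge_vector_def right_diff_distrib sum_subtractf)
    ultimately show ?case
      by simp
  qed
qed

lemma is_biresidue_mv_eq_0:
  assumes "is_biresidue n L b" and "z \<in> Delta n" and "mv n b z = (\<lambda>_. 0)"
  shows "z = (\<lambda>_. 0)"
proof -
  have "z = mv n L (mv n b z)"
    using assms(1,2) unfolding is_biresidue_def by auto
  also have "\<dots> = mv n L (\<lambda>_. 0)"
    using assms(3) by simp
  also have "\<dots> = (\<lambda>_. 0)"
    by (auto simp: mv_def)
  finally show ?thesis .
qed

theorem lemma5p2:
  fixes n :: nat and L b :: "nat \<Rightarrow> nat \<Rightarrow> complex" and I :: "nat set"
  assumes "add_alternating n L" and "normalized n L" and "generic n L"
    and "is_biresidue n L b"
    and "I \<subseteq> {i. i + 1 < n}"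
    and "\<forall>i\<in>I. smoothable_edge n b i (i + 1)"
  shows "\<forall>c :: nat \<Rightarrow> complex.
           (\<forall>k<n. (\<Sum>i\<in>I. c i * smoothable_weight b i (i + 1) k) = 0) \<longrightarrow> (\<forall>i\<in>I. c i = 0)"
proof (intro allI impI)
  fix c :: "nat \<Rightarrow> complex"
  assume c: "\<forall>k<n. (\<Sum>i\<in>I. c i * smoothable_weight b i (i + 1) k) = 0"
  have b_alt: "add_alternating n b"
    using assms(4) unfolding is_biresidue_def by blast
  have b_edge: "\<forall>i\<in>I. b i (i + 1) \<noteq> 0"
    using assms(6) unfolding smoothable_edge_def by blast
  define z where "z = (\<lambda>k. \<Sum>i\<in>I. c i / b i (i + 1) * edge_vector i (i + 1) k)"
  have "mv n b z = (\<lambda>_. 0)"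
    using c mv_sum_edge_vector[OF b_alt assms(5) b_edge] unfolding z_def by (auto simp: mv_def)
  moreover have "z \<in> Delta n"
    unfolding z_def by (rule sum_edge_vector_in_Delta[OF assms(5)])
  ultimately have "z = (\<lambda>_. 0)"
    using is_biresidue_mv_eq_0[OF assms(4)] by blast
  moreover have "finite I"
    using assms(5) by (rule finite_subset) (auto intro: finite_subset[of _ "{..<n}"])
  ultimately have "\<forall>i\<in>I. c i / b i (i + 1) = 0"
    unfolding z_def by (rule sum_edge_vector_eq_0_imp[rotated])
  then show "\<forall>i\<in>I. c i = 0"
    using b_edge by simp
qed

end
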